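(* Let $n\ge2$, $\omega\in(0,1)$, and let $B$ be a random variable with mean $0$ and variance $1$. Let $B_1,\dots,B_n$ be independent with $B_i\overset d=\mu_i+\sigma_iB$, $\sigma_i>0$, $\sigma_1\le\cdots\le\sigma_n$. Then for every sequence $\tau\in\mathsf S_n$ and every schedule $\boldsymbol x$, $$C(\tau,\boldsymbol x,\omega)\ge\bigl[\omega\,\mathbb EB(\omega)^-+(1-\omega)\,\mathbb EB(\omega)^+\bigr]\sum_{i=1}^{n-1}\sigma_i,$$ where $B(\omega)=B-Q_B(1-\omega)$ and $Q_B(y)=\inf\{x:y\le\mathbb P(B\le x)\}$.
   Context: Appointment model: a sequence is a permutation $\tau\in\mathsf S_n$, $\tau(i)$ the patient in slot $i$; a schedule is $\boldsymbol x=(x_1,\dots,x_n)\in\mathbb R_+^n$, $x_j$ the interarrival time between patient $j$ and the next patient. Waiting and idle times: $W_1=I_1=0$, $W_{i+1}=(W_i+B_{\tau(i)}-x_{\tau(i)})^+$, $I_{i+1}=(W_i+B_{\tau(i)}-x_{\tau(i)})^-$, $a^+=\max\{0,a\}$, $a^-=\max\{0,-a\}$. Cost $C(\tau,\boldsymbol x,\omega)=\omega\sum_{i=1}^n\mathbb EI_i+(1-\omega)\sum_{i=1}^n\mathbb EW_i$. *)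

theory Defs
  imports "HOL-Probability.Probability" "HOL-Combinatorics.Permutations"
begin

text \<open>Patients and slots are indexed by 1..n. Given realised service times b (indexed by
patient), a schedule x (indexed by patient) and a sequence tau (slot to patient),
wait_time tau x b i and idle_time tau x b i are W_i and I_i (for i \<ge> 1).\<close>

fun wait_time :: "(nat \<Rightarrow> nat) \<Rightarrow> (nat \<Rightarrow> real) \<Rightarrow> (nat \<Rightarrow> real) \<Rightarrow> nat \<Rightarrow> real" where
  "wait_time \<tau> x b 0 = 0"
| "wait_time \<tau> x b (Suc 0) = 0"
| "wait_time \<tau> x b (Suc (Suc i)) =
     max 0 (wait_time \<tau> x b (Suc i) + b (\<tau> (Suc i)) - x (\<tau> (Suc i)))"

fun idle_time :: "(nat \<Rightarrow> nat) \<Rightarrow> (nat \<Rightarrow> real) \<Rightarrow> (nat \<Rightarrow> real) \<Rightarrow> nat \<Rightarrow> real" where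
  "idle_time \<tau> x b 0 = 0"
| "idle_time \<tau> x b (Suc 0) = 0"
| "idle_time \<tau> x b (Suc (Suc i)) =
     max 0 (- (wait_time \<tau> x b (Suc i) + b (\<tau> (Suc i)) - x (\<tau> (Suc i))))"

definition appt_cost ::
  "'a measure \<Rightarrow> (nat \<Rightarrow> 'a \<Rightarrow> real) \<Rightarrow> nat \<Rightarrow> (nat \<Rightarrow> nat) \<Rightarrow> (nat \<Rightarrow> real) \<Rightarrow> real \<Rightarrow> real" where
  "appt_cost M Bs n \<tau> x \<omega> =
     \<omega> * (\<Sum>i=1..n. integral\<^sup>L M (\<lambda>s. idle_time \<tau> x (\<lambda>j. Bs j s) i))
     + (1 - \<omega>) * (\<Sum>i=1..n. integral\<^sup>L M (\<lambda>s. wait_time \<tau> x (\<lambda>j. Bs j s) i))"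

definition quantile :: "'b measure \<Rightarrow> ('b \<Rightarrow> real) \<Rightarrow> real \<Rightarrow> real" where
  "quantile N B y = Inf {t::real. y \<le> measure N {s \<in> space N. B s \<le> t}}"

end

theory Submission
  imports Defs
begin

text \<open>The cost of slot \<open>j + 1\<close> is \<open>\<omega> I\<^sub>j\<^sub>+\<^sub>1 + (1 - \<omega>) W\<^sub>j\<^sub>+\<^sub>1 = \<omega> (V - U)\<^sup>- + (1 - \<omega>) (V - U)\<^sup>+\<close>
  with \<open>V = B\<^sub>\<tau>\<^sub>(\<^sub>j\<^sub>)\<close> and \<open>U = x\<^sub>\<tau>\<^sub>(\<^sub>j\<^sub>) - W\<^sub>j\<close>, where \<open>W\<^sub>j\<close> depends only on earlier service
  times and is hence independent of \<open>V\<close>. By the newsvendor argument the expectation of this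
  loss is smallest when \<open>U\<close> is the constant \<open>(1 - \<omega>)\<close>-quantile of \<open>V\<close>, and since
  \<open>V = \<mu> + \<sigma> B\<close> in law that minimum is \<open>\<sigma>\<^sub>\<tau>\<^sub>(\<^sub>j\<^sub>)\<close> times the bracket of the theorem.
  Instead of conditioning on \<open>U\<close>, the minimality is obtained by integrating the subgradient
  inequality of the loss at the quantile: its correction terms are products of a function of
  \<open>U\<close> and a function of \<open>V\<close>, so they factorise, and the quantile conditions fix their signs.
  Summing over the first \<open>n - 1\<close> slots leaves all \<open>\<sigma>\<^sub>i\<close> but one, which is at least
  \<open>\<sigma>\<^sub>1 + \<dots> + \<sigma>\<^sub>n\<^sub>-\<^sub>1\<close>.\<close>

text \<open>The pinball loss of quantile regression at level \<open>1 - \<omega>\<close>.\<close>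

definition check_loss :: "real \<Rightarrow> real \<Rightarrow> real" where
  "check_loss \<omega> d = \<omega> * max 0 (- d) + (1 - \<omega>) * max 0 d"

lemma check_loss_nonneg: "0 \<le> \<omega> \<Longrightarrow> \<omega> \<le> 1 \<Longrightarrow> 0 \<le> check_loss \<omega> d"
  by (simp add: check_loss_def)

lemma check_loss_scale: "0 \<le> c \<Longrightarrow> check_loss \<omega> (c * d) = c * check_loss \<omega> d"
  by (cases "c = 0") (auto simp: check_loss_def max_def algebra_simps zero_le_mult_iff mult_le_0_iff)

text \<open>The right and left derivatives of the convex function \<open>u \<mapsto> check_loss \<omega> (v - u)\<close>
  at \<open>q\<close> are \<open>indicator {..q} v - (1 - \<omega>)\<close> and \<open>indicator {..<q} v - (1 - \<omega>)\<close>.\<close>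

lemma check_loss_subgradient:
  assumes "0 \<le> \<omega>" "\<omega> \<le> 1"
  shows "check_loss \<omega> (v - q) + max 0 (u - q) * (indicator {..q} v - (1 - \<omega>))
           - max 0 (q - u) * (indicator {..<q} v - (1 - \<omega>))
         \<le> check_loss \<omega> (v - u)"
  using assms by (cases "u \<le> q"; cases "v \<le> q"; cases "v < q"; cases "v \<le> u")
    (auto simp: check_loss_def max_def algebra_simps mult_left_mono mult_right_mono)

lemma (in prob_space)
  fixes V :: "'a \<Rightarrow> 'c"
  assumes "V \<in> measurable M N" and "A \<in> sets N"
  shows integrable_indicator_comp: "integrable M (\<lambda>s. indicator A (V s) :: real)"
    and expectation_indicator_comp: "expectation (\<lambda>s. indicator A (V s)) = prob {s \<in> space M. V s \<in> A}"
proof -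
  let ?E = "{s \<in> space M. V s \<in> A}"
  have E: "?E \<in> sets M"
    using assms by measurable
  have "integrable M (\<lambda>s. indicator A (V s) :: real) \<longleftrightarrow> integrable M (indicator ?E :: _ \<Rightarrow> real)"
    by (rule Bochner_Integration.integrable_cong) (auto split: split_indicator)
  moreover have "expectation (\<lambda>s. indicator A (V s)) = expectation (indicator ?E :: _ \<Rightarrow> real)"
    by (rule Bochner_Integration.integral_cong) (auto split: split_indicator)
  ultimately show "integrable M (\<lambda>s. indicator A (V s) :: real)"
    and "expectation (\<lambda>s. indicator A (V s)) = prob ?E"
    using E sets.sets_into_space[OF E] by (simp_all add: Int_absorb2 emeasure_eq_measure)
qed

lemma (in prob_space) expectation_check_loss_le_indep:
  assumes ind: "indep_var borel U borel V"
    and U: "integrable M U" and V: "integrable M V"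
    and \<omega>: "0 \<le> \<omega>" "\<omega> \<le> 1"
    and q_upper: "1 - \<omega> \<le> prob {s \<in> space M. V s \<le> q}"
    and q_lower: "prob {s \<in> space M. V s < q} \<le> 1 - \<omega>"
  shows "expectation (\<lambda>s. check_loss \<omega> (V s - q)) \<le> expectation (\<lambda>s. check_loss \<omega> (V s - U s))"
proof -
  have [measurable]: "U \<in> borel_measurable M" and V_measurable[measurable]: "V \<in> borel_measurable M"
    using U V by auto
  note indicator_V = integrable_indicator_comp[OF V_measurable] expectation_indicator_comp[OF V_measurable]
  define r where "r v = indicator {..q} v - (1 - \<omega>)" for v :: real
  define l where "l v = indicator {..<q} v - (1 - \<omega>)" for v :: real
  have "expectation (\<lambda>s. r (V s)) = prob {s \<in> space M. V s \<le> q} - (1 - \<omega>)"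
    unfolding r_def
    by (subst Bochner_Integration.integral_diff)
      (auto simp: prob_space indicator_V)
  then have r_nonneg: "0 \<le> expectation (\<lambda>s. r (V s))"
    using q_upper by simp
  have "expectation (\<lambda>s. l (V s)) = prob {s \<in> space M. V s < q} - (1 - \<omega>)"
    unfolding l_def
    by (subst Bochner_Integration.integral_diff)
      (auto simp: prob_space indicator_V)
  then have l_nonpos: "expectation (\<lambda>s. l (V s)) \<le> 0"
    using q_lower by simp
  have r_integrable: "integrable M (\<lambda>s. r (V s))" and l_integrable: "integrable M (\<lambda>s. l (V s))"
    unfolding r_def l_def by (auto simp: indicator_V)
  have ind_r: "indep_var borel (\<lambda>s. max 0 (U s - q)) borel (\<lambda>s. r (V s))"
    and ind_l: "indep_var borel (\<lambda>s. max 0 (q - U s)) borel (\<lambda>s. l (V s))"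
    by (auto simp: r_def l_def intro!: indep_var_compose[unfolded comp_def, OF ind])
  have "expectation (\<lambda>s. check_loss \<omega> (V s - q))
      \<le> expectation (\<lambda>s. check_loss \<omega> (V s - q)) + expectation (\<lambda>s. max 0 (U s - q)) * expectation (\<lambda>s. r (V s))
        - expectation (\<lambda>s. max 0 (q - U s)) * expectation (\<lambda>s. l (V s))"
  proof -
    have "0 \<le> expectation (\<lambda>s. max 0 (U s - q))" "0 \<le> expectation (\<lambda>s. max 0 (q - U s))"
      by (simp_all add: integral_nonneg_AE)
    then show ?thesis
      using mult_nonneg_nonneg[OF _ r_nonneg] mult_nonneg_nonpos[OF _ l_nonpos] by fastforce
  qed
  also have "\<dots> = expectation (\<lambda>s. check_loss \<omega> (V s - q) + max 0 (U s - q) * r (V s)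
                    - max 0 (q - U s) * l (V s))"
    using U V r_integrable l_integrable
      indep_var_lebesgue_integral[OF ind_r] indep_var_integrable[OF ind_r]
      indep_var_lebesgue_integral[OF ind_l] indep_var_integrable[OF ind_l]
    by (simp add: check_loss_def)
  also have "\<dots> \<le> expectation (\<lambda>s. check_loss \<omega> (V s - U s))"
    using U V r_integrable l_integrable indep_var_integrable[OF ind_r] indep_var_integrable[OF ind_l]
      check_loss_subgradient[OF \<omega>]
    by (intro integral_mono) (auto simp: check_loss_def r_def l_def)
  finally show ?thesis .
qed

lemma
  fixes V :: "'a \<Rightarrow> real" and W :: "'b \<Rightarrow> real" and g :: "real \<Rightarrow> 'c::{banach, second_countable_topology}"
  assumes distr_eq: "distr M borel V = distr N borel W"
    and [measurable]: "V \<in> borel_measurable M" "W \<in> borel_measurable N" "g \<in> borel_measurable borel"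
  shows integral_eq_of_distr_eq: "integral\<^sup>L M (\<lambda>s. g (V s)) = integral\<^sup>L N (\<lambda>s. g (W s))"
    and integrable_iff_of_distr_eq: "integrable M (\<lambda>s. g (V s)) \<longleftrightarrow> integrable N (\<lambda>s. g (W s))"
proof -
  show "integral\<^sup>L M (\<lambda>s. g (V s)) = integral\<^sup>L N (\<lambda>s. g (W s))"
    using integral_distr[of V M borel g] integral_distr[of W N borel g] distr_eq by simp
  show "integrable M (\<lambda>s. g (V s)) \<longleftrightarrow> integrable N (\<lambda>s. g (W s))"
    using integrable_distr_eq[of V M borel g] integrable_distr_eq[of W N borel g] distr_eq by simp
qed

lemma measure_eq_of_distr_eq:
  fixes V :: "'a \<Rightarrow> real" and W :: "'b \<Rightarrow> real"
  assumes "distr M borel V = distr N borel W"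
    and "V \<in> borel_measurable M" "W \<in> borel_measurable N" "A \<in> sets borel"
  shows "measure M {s \<in> space M. V s \<in> A} = measure N {s \<in> space N. W s \<in> A}"
  using measure_distr[of V M borel A] measure_distr[of W N borel A] assms
  by (simp add: vimage_def Int_def conj_commute)

lemma
  fixes V :: "'a \<Rightarrow> real" and B :: "'b \<Rightarrow> real"
  assumes distr_eq: "distr M borel V = distr N borel (\<lambda>s. \<mu> + \<sigma> * B s)"
    and [measurable]: "V \<in> borel_measurable M" "B \<in> borel_measurable N" and "0 < \<sigma>"
  shows measure_le_of_distr_affine:
      "measure M {s \<in> space M. V s \<le> \<mu> + \<sigma> * q} = measure N {s \<in> space N. B s \<le> q}"
    and measure_less_of_distr_affine:
      "measure M {s \<in> space M. V s < \<mu> + \<sigma> * q} = measure N {s \<in> space N. B s < q}"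
    and expectation_check_loss_of_distr_affine:
      "integral\<^sup>L M (\<lambda>s. check_loss \<omega> (V s - (\<mu> + \<sigma> * q)))
        = \<sigma> * integral\<^sup>L N (\<lambda>s. check_loss \<omega> (B s - q))"
proof -
  show "measure M {s \<in> space M. V s \<le> \<mu> + \<sigma> * q} = measure N {s \<in> space N. B s \<le> q}"
    and "measure M {s \<in> space M. V s < \<mu> + \<sigma> * q} = measure N {s \<in> space N. B s < q}"
    using measure_eq_of_distr_eq[OF distr_eq, of "{..\<mu> + \<sigma> * q}"]
      measure_eq_of_distr_eq[OF distr_eq, of "{..<\<mu> + \<sigma> * q}"] \<open>0 < \<sigma>\<close>
    by simp_all
  have "integral\<^sup>L M (\<lambda>s. check_loss \<omega> (V s - (\<mu> + \<sigma> * q)))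
      = integral\<^sup>L N (\<lambda>s. check_loss \<omega> (\<sigma> * (B s - q)))"
    using integral_eq_of_distr_eq[OF distr_eq, of "\<lambda>v. check_loss \<omega> (v - (\<mu> + \<sigma> * q))"]
    by (simp add: check_loss_def algebra_simps)
  then show "integral\<^sup>L M (\<lambda>s. check_loss \<omega> (V s - (\<mu> + \<sigma> * q)))
      = \<sigma> * integral\<^sup>L N (\<lambda>s. check_loss \<omega> (B s - q))"
    using \<open>0 < \<sigma>\<close> by (simp add: check_loss_scale)
qed

lemma (in real_distribution) cdf_at_Inf_quantile:
  assumes "0 < y" "y < 1"
  defines "q \<equiv> Inf {t. y \<le> cdf M t}"
  shows "y \<le> cdf M q" and "measure M {..<q} \<le> y"
proof -
  let ?S = "{t. y \<le> cdf M t}"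
  have "\<forall>\<^sub>F t in at_top. y < cdf M t"
    using cdf_lim_at_top_prob assms by (intro order_tendstoD) auto
  then obtain t1 where "y < cdf M t1"
    by (metis eventually_happens' trivial_limit_at_top_linorder)
  then have S_nonempty: "?S \<noteq> {}"
    by (auto intro: less_imp_le)
  have "\<forall>\<^sub>F t in at_bot. cdf M t < y"
    using cdf_lim_at_bot assms by (intro order_tendstoD) auto
  then obtain t0 where "\<And>t. t \<le> t0 \<Longrightarrow> cdf M t < y"
    by (auto simp: eventually_at_bot_linorder)
  then have S_bdd: "bdd_below ?S"
    by (auto intro!: bdd_belowI[of _ t0] simp: not_less[symmetric])
  show "y \<le> cdf M q"
  proof (rule tendsto_lowerbound)
    show "(cdf M \<longlongrightarrow> cdf M q) (at_right q)"
      using cdf_is_right_cont by (simp add: continuous_within)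
    have "y \<le> cdf M t" if "q < t" for t
    proof -
      obtain s where "s \<in> ?S" "s < t"
        using \<open>q < t\<close> cInf_less_iff[OF S_nonempty S_bdd] unfolding q_def by auto
      then show ?thesis
        using cdf_nondecreasing[of s t] by auto
    qed
    then show "\<forall>\<^sub>F t in at_right q. y \<le> cdf M t"
      unfolding eventually_at_right_field by (intro exI[of _ "q + 1"]) auto
  qed simp
  show "measure M {..<q} \<le> y"
  proof (rule tendsto_upperbound)
    show "(cdf M \<longlongrightarrow> measure M {..<q}) (at_left q)"
      by (rule cdf_at_left)
    have "cdf M t \<le> y" if "t < q" for t
      using that cInf_lower[OF _ S_bdd, of t] unfolding q_def by force
    then show "\<forall>\<^sub>F t in at_left q. cdf M t \<le> y"
      unfolding eventually_at_left_field by (intro exI[of _ "q - 1"]) auto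
  qed simp
qed

lemma quantile_bounds:
  assumes "prob_space N" and [measurable]: "B \<in> borel_measurable N" and "0 < y" "y < 1"
  shows "y \<le> measure N {s \<in> space N. B s \<le> quantile N B y}"
    and "measure N {s \<in> space N. B s < quantile N B y} \<le> y"
proof -
  interpret N: prob_space N by fact
  define D where "D = distr N borel B"
  interpret D: real_distribution D
    unfolding D_def by simp
  have measure_B: "measure N {s \<in> space N. B s \<in> A} = measure D A" if "A \<in> sets borel" for A
    unfolding D_def using that by (subst measure_distr) (auto simp: vimage_def Int_def conj_commute)
  have "quantile N B y = Inf {t. y \<le> cdf D t}"
    unfolding quantile_def cdf_def using measure_B[of "{..t}" for t] by simp
  then show "y \<le> measure N {s \<in> space N. B s \<le> quantile N B y}"
    and "measure N {s \<in> space N. B s < quantile N B y} \<le> y"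
    using D.cdf_at_Inf_quantile[OF assms(3,4)] measure_B[of "{..quantile N B y}"]
      measure_B[of "{..<quantile N B y}"]
    by (simp_all add: cdf_def)
qed

lemma wait_time_Suc:
  "1 \<le> j \<Longrightarrow> wait_time \<tau> x b (Suc j) = max 0 (wait_time \<tau> x b j + b (\<tau> j) - x (\<tau> j))"
  by (cases j) auto

lemma idle_time_Suc:
  "1 \<le> j \<Longrightarrow> idle_time \<tau> x b (Suc j) = max 0 (- (wait_time \<tau> x b j + b (\<tau> j) - x (\<tau> j)))"
  by (cases j) auto

lemma slot_cost_eq_check_loss:
  "1 \<le> j \<Longrightarrow> \<omega> * idle_time \<tau> x b (Suc j) + (1 - \<omega>) * wait_time \<tau> x b (Suc j)
    = check_loss \<omega> (b (\<tau> j) - (x (\<tau> j) - wait_time \<tau> x b j))"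
  by (simp add: wait_time_Suc idle_time_Suc check_loss_def algebra_simps)

lemma wait_time_cong:
  "(\<And>k. 1 \<le> k \<Longrightarrow> k < j \<Longrightarrow> b (\<tau> k) = b' (\<tau> k)) \<Longrightarrow> wait_time \<tau> x b j = wait_time \<tau> x b' j"
proof (induction j)
  case (Suc j)
  then show ?case
    by (cases "j = 0") (simp_all add: wait_time_Suc)
qed simp

lemma borel_measurable_wait_time_PiM:
  "\<tau> ` {1..<j} \<subseteq> A \<Longrightarrow> (\<lambda>f. wait_time \<tau> x f j) \<in> borel_measurable (PiM A (\<lambda>_. borel))"
proof (induction j)
  case (Suc j)
  show ?case
  proof (cases "j = 0")
    case False
    then have "\<tau> ` {1..<j} \<subseteq> A" and "\<tau> j \<in> A"
      using Suc.prems by auto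
    then have [measurable]: "(\<lambda>f. wait_time \<tau> x f j) \<in> borel_measurable (PiM A (\<lambda>_. borel))"
      and [measurable]: "(\<lambda>f. f (\<tau> j)) \<in> borel_measurable (PiM A (\<lambda>_. borel))"
      using Suc.IH by (auto intro: measurable_component_singleton)
    show ?thesis
      using False by (simp add: wait_time_Suc)
  qed simp
qed simp

lemma (in prob_space) integrable_wait_time:
  "(\<And>k. 1 \<le> k \<Longrightarrow> k < j \<Longrightarrow> integrable M (Bs (\<tau> k)))
    \<Longrightarrow> integrable M (\<lambda>s. wait_time \<tau> x (\<lambda>k. Bs k s) j)"
proof (induction j)
  case (Suc j)
  show ?case
  proof (cases "j = 0")
    case False
    then have "integrable M (\<lambda>s. wait_time \<tau> x (\<lambda>k. Bs k s) j)" and "integrable M (Bs (\<tau> j))"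
      using Suc by auto
    with False show ?thesis
      by (simp add: wait_time_Suc)
  qed simp
qed simp

lemma (in prob_space) indep_var_wait_time:
  assumes "indep_vars (\<lambda>_. borel) Bs I" and "inj_on \<tau> {1..j}" and "\<tau> ` {1..j} \<subseteq> I" and "1 \<le> j"
  shows "indep_var borel (\<lambda>s. wait_time \<tau> x (\<lambda>k. Bs k s) j) borel (Bs (\<tau> j))"
proof -
  let ?A = "\<tau> ` {1..<j}"
  have disjoint: "?A \<inter> {\<tau> j} = {}"
    using \<open>inj_on \<tau> {1..j}\<close> by (auto dest: inj_onD)
  have "indep_var borel ((\<lambda>f. wait_time \<tau> x f j) \<circ> (\<lambda>s. restrict (\<lambda>i. Bs i s) ?A))
                  borel ((\<lambda>f. f (\<tau> j)) \<circ> (\<lambda>s. restrict (\<lambda>i. Bs i s) {\<tau> j}))"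
    using assms disjoint borel_measurable_wait_time_PiM[of \<tau> j ?A x]
    by (intro indep_var_compose[OF indep_var_restrict] measurable_component_singleton) auto
  moreover have "wait_time \<tau> x (restrict (\<lambda>i. Bs i s) ?A) j = wait_time \<tau> x (\<lambda>k. Bs k s) j" for s
    by (rule wait_time_cong) auto
  ultimately show ?thesis
    by (simp add: comp_def)
qed

lemma (in prob_space) expected_slot_cost_eq_check_loss:
  assumes "1 \<le> j" and "\<And>k. 1 \<le> k \<Longrightarrow> k \<le> j \<Longrightarrow> integrable M (Bs (\<tau> k))"
  shows "\<omega> * expectation (\<lambda>s. idle_time \<tau> x (\<lambda>k. Bs k s) (Suc j))
      + (1 - \<omega>) * expectation (\<lambda>s. wait_time \<tau> x (\<lambda>k. Bs k s) (Suc j))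
    = expectation (\<lambda>s. check_loss \<omega> (Bs (\<tau> j) s - (x (\<tau> j) - wait_time \<tau> x (\<lambda>k. Bs k s) j)))"
proof -
  have "integrable M (\<lambda>s. wait_time \<tau> x (\<lambda>k. Bs k s) j)"
    and "integrable M (\<lambda>s. wait_time \<tau> x (\<lambda>k. Bs k s) (Suc j))"
    using assms(2) by (auto intro!: integrable_wait_time)
  moreover have "integrable M (\<lambda>s. idle_time \<tau> x (\<lambda>k. Bs k s) (Suc j))"
    using calculation assms by (simp add: idle_time_Suc)
  ultimately have "\<omega> * expectation (\<lambda>s. idle_time \<tau> x (\<lambda>k. Bs k s) (Suc j))
      + (1 - \<omega>) * expectation (\<lambda>s. wait_time \<tau> x (\<lambda>k. Bs k s) (Suc j))
      = expectation (\<lambda>s. \<omega> * idle_time \<tau> x (\<lambda>k. Bs k s) (Suc j)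
                          + (1 - \<omega>) * wait_time \<tau> x (\<lambda>k. Bs k s) (Suc j))"
    by simp
  also have "\<dots> = expectation (\<lambda>s. check_loss \<omega> (Bs (\<tau> j) s - (x (\<tau> j) - wait_time \<tau> x (\<lambda>k. Bs k s) j)))"
    using assms(1) by (simp add: slot_cost_eq_check_loss)
  finally show ?thesis .
qed

lemma appt_cost_eq_sum_slots:
  assumes "1 \<le> n"
  shows "appt_cost M Bs n \<tau> x \<omega> =
    (\<Sum>j=1..n-1. \<omega> * integral\<^sup>L M (\<lambda>s. idle_time \<tau> x (\<lambda>k. Bs k s) (Suc j))
                + (1 - \<omega>) * integral\<^sup>L M (\<lambda>s. wait_time \<tau> x (\<lambda>k. Bs k s) (Suc j)))"
proof -
  have drop_first: "(\<Sum>i=1..n. f i) = (\<Sum>j=1..n-1. f (Suc j))" if "f 1 = 0" for f :: "nat \<Rightarrow> real"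
    using assms that sum.atLeast_Suc_atMost[of 1 n f] sum.shift_bounds_cl_Suc_ivl[of f 1 "n - 1"]
    by simp
  have "(\<Sum>i=1..n. integral\<^sup>L M (\<lambda>s. idle_time \<tau> x (\<lambda>k. Bs k s) i))
      = (\<Sum>j=1..n-1. integral\<^sup>L M (\<lambda>s. idle_time \<tau> x (\<lambda>k. Bs k s) (Suc j)))"
    and "(\<Sum>i=1..n. integral\<^sup>L M (\<lambda>s. wait_time \<tau> x (\<lambda>k. Bs k s) i))
      = (\<Sum>j=1..n-1. integral\<^sup>L M (\<lambda>s. wait_time \<tau> x (\<lambda>k. Bs k s) (Suc j)))"
    by (rule drop_first; simp)+
  then show ?thesis
    unfolding appt_cost_def by (simp add: sum.distrib sum_distrib_left)
qed

lemma sum_le_sum_permutes_but_last: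
  fixes \<sigma> :: "nat \<Rightarrow> real"
  assumes "\<tau> permutes {1..n}" and "\<And>i j. 1 \<le> i \<Longrightarrow> i \<le> j \<Longrightarrow> j \<le> n \<Longrightarrow> \<sigma> i \<le> \<sigma> j"
  shows "(\<Sum>i=1..n-1. \<sigma> i) \<le> (\<Sum>j=1..n-1. \<sigma> (\<tau> j))"
proof (cases n)
  case (Suc m)
  have "(\<Sum>i=1..n. \<sigma> i) = (\<Sum>j=1..n. \<sigma> (\<tau> j))"
    using sum.permute[OF assms(1), of \<sigma>] by (simp add: comp_def)
  moreover have "\<sigma> (\<tau> n) \<le> \<sigma> n"
    using permutes_in_image[OF assms(1), of n] Suc by (intro assms(2)) auto
  ultimately show ?thesis
    using Suc by (simp add: sum.cl_ivl_Suc)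
qed simp

lemma expected_slot_cost_ge:
  fixes M :: "'a measure" and N :: "'b measure" and B :: "'b \<Rightarrow> real" and Bs :: "nat \<Rightarrow> 'a \<Rightarrow> real"
  assumes "prob_space M" and "prob_space N"
    and B_measurable[measurable]: "B \<in> borel_measurable N" and "integrable N B"
    and indep: "prob_space.indep_vars M (\<lambda>_. borel) Bs {1..n}"
    and distr_Bs: "\<And>i. i \<in> {1..n} \<Longrightarrow> distr M borel (Bs i) = distr N borel (\<lambda>s. \<mu> i + \<sigma> i * B s)"
    and \<sigma>_pos: "\<And>i. i \<in> {1..n} \<Longrightarrow> \<sigma> i > 0"
    and \<tau>: "\<tau> permutes {1..n}" and j: "1 \<le> j" "j \<le> n"
    and \<omega>: "0 \<le> \<omega>" "\<omega> \<le> 1"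
    and q_upper: "1 - \<omega> \<le> measure N {s \<in> space N. B s \<le> q}"
    and q_lower: "measure N {s \<in> space N. B s < q} \<le> 1 - \<omega>"
  shows "\<sigma> (\<tau> j) * integral\<^sup>L N (\<lambda>s. check_loss \<omega> (B s - q))
    \<le> \<omega> * integral\<^sup>L M (\<lambda>s. idle_time \<tau> x (\<lambda>k. Bs k s) (Suc j))
      + (1 - \<omega>) * integral\<^sup>L M (\<lambda>s. wait_time \<tau> x (\<lambda>k. Bs k s) (Suc j))"
proof -
  interpret M: prob_space M by fact
  interpret N: prob_space N by fact
  have \<tau>_in: "\<tau> k \<in> {1..n}" if "k \<in> {1..n}" for k
    using permutes_in_image[OF \<tau>] that by simp
  have Bs_measurable[measurable]: "Bs k \<in> borel_measurable M" if "k \<in> {1..n}" for k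
    using indep that by (auto simp: M.indep_vars_def)
  have Bs_integrable: "integrable M (Bs k)" if "k \<in> {1..n}" for k
  proof -
    have "integrable M (\<lambda>s. Bs k s) \<longleftrightarrow> integrable N (\<lambda>s. \<mu> k + \<sigma> k * B s)"
      by (rule integrable_iff_of_distr_eq[OF distr_Bs[OF that]]) (use that in auto)
    then show ?thesis
      using \<open>integrable N B\<close> by simp
  qed
  let ?W = "\<lambda>s. wait_time \<tau> x (\<lambda>k. Bs k s) j"
  have \<tau>j: "\<tau> j \<in> {1..n}"
    using j by (intro \<tau>_in) simp
  have "\<tau> ` {1..j} \<subseteq> {1..n}"
    using j by (intro image_subsetI \<tau>_in) simp
  then have "M.indep_var borel ?W borel (Bs (\<tau> j))"
    by (rule M.indep_var_wait_time[OF indep permutes_inj_on[OF \<tau>] _ j(1)])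
  then have "M.indep_var borel ((\<lambda>w. x (\<tau> j) - w) \<circ> ?W) borel (id \<circ> Bs (\<tau> j))"
    by (rule M.indep_var_compose) auto
  then have indep_UV: "M.indep_var borel (\<lambda>s. x (\<tau> j) - ?W s) borel (Bs (\<tau> j))"
    by (simp add: comp_def)
  have W_integrable: "integrable M ?W"
    using j by (intro M.integrable_wait_time Bs_integrable \<tau>_in) simp
  note transfer = measure_le_of_distr_affine[OF distr_Bs[OF \<tau>j] Bs_measurable[OF \<tau>j] B_measurable \<sigma>_pos[OF \<tau>j]]
    measure_less_of_distr_affine[OF distr_Bs[OF \<tau>j] Bs_measurable[OF \<tau>j] B_measurable \<sigma>_pos[OF \<tau>j]]
    expectation_check_loss_of_distr_affine[OF distr_Bs[OF \<tau>j] Bs_measurable[OF \<tau>j] B_measurable \<sigma>_pos[OF \<tau>j]]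
  have "\<sigma> (\<tau> j) * integral\<^sup>L N (\<lambda>s. check_loss \<omega> (B s - q))
      \<le> M.expectation (\<lambda>s. check_loss \<omega> (Bs (\<tau> j) s - (x (\<tau> j) - ?W s)))"
    using W_integrable Bs_integrable[OF \<tau>j] \<omega> q_upper q_lower
    by (auto simp flip: transfer intro!: M.expectation_check_loss_le_indep[OF indep_UV])
  also have "\<dots> = \<omega> * M.expectation (\<lambda>s. idle_time \<tau> x (\<lambda>k. Bs k s) (Suc j))
      + (1 - \<omega>) * M.expectation (\<lambda>s. wait_time \<tau> x (\<lambda>k. Bs k s) (Suc j))"
    using j by (intro M.expected_slot_cost_eq_check_loss[symmetric] Bs_integrable \<tau>_in) auto
  finally show ?thesis .
qed

theorem proposition5p2:
  fixes M :: "'a measure" and N :: "'b measure"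
    and B :: "'b \<Rightarrow> real" and Bs :: "nat \<Rightarrow> 'a \<Rightarrow> real"
    and \<mu> \<sigma> :: "nat \<Rightarrow> real" and n :: nat and \<omega> :: real
    and \<tau> :: "nat \<Rightarrow> nat" and x :: "nat \<Rightarrow> real"
  assumes "n \<ge> 2"
    and "0 < \<omega>" and "\<omega> < 1"
    and "prob_space N" and "B \<in> borel_measurable N"
    and "integrable N B" and "integral\<^sup>L N B = 0"
    and "integrable N (\<lambda>s. (B s)\<^sup>2)"
    and "integral\<^sup>L N (\<lambda>s. (B s - integral\<^sup>L N B)\<^sup>2) = 1"
    and "prob_space M"
    and "prob_space.indep_vars M (\<lambda>_. borel) Bs {1..n}"
    and "\<And>i. i \<in> {1..n} \<Longrightarrow> distr M borel (Bs i) = distr N borel (\<lambda>s. \<mu> i + \<sigma> i * B s)"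
    and "\<And>i. i \<in> {1..n} \<Longrightarrow> \<sigma> i > 0"
    and "\<And>i j. 1 \<le> i \<Longrightarrow> i \<le> j \<Longrightarrow> j \<le> n \<Longrightarrow> \<sigma> i \<le> \<sigma> j"
    and "\<tau> permutes {1..n}"
    and "\<And>i. i \<in> {1..n} \<Longrightarrow> x i \<ge> 0"
  shows "appt_cost M Bs n \<tau> x \<omega> \<ge>
    (\<omega> * integral\<^sup>L N (\<lambda>s. max 0 (- (B s - quantile N B (1 - \<omega>))))
     + (1 - \<omega>) * integral\<^sup>L N (\<lambda>s. max 0 (B s - quantile N B (1 - \<omega>))))
    * (\<Sum>i=1..n-1. \<sigma> i)"
proof -
  interpret N: prob_space N by fact
  define q where "q = quantile N B (1 - \<omega>)"
  define K where "K = N.expectation (\<lambda>s. check_loss \<omega> (B s - q))"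
  have q_bounds: "1 - \<omega> \<le> N.prob {s \<in> space N. B s \<le> q}" "N.prob {s \<in> space N. B s < q} \<le> 1 - \<omega>"
    unfolding q_def using quantile_bounds[OF assms(4,5)] assms(2,3) by simp_all
  have K_nonneg: "0 \<le> K"
    unfolding K_def using assms(2,3) by (simp add: integral_nonneg_AE check_loss_nonneg)
  have "K * (\<Sum>i=1..n-1. \<sigma> i) \<le> K * (\<Sum>j=1..n-1. \<sigma> (\<tau> j))"
    using sum_le_sum_permutes_but_last[OF assms(15,14)] K_nonneg by (rule mult_left_mono)
  also have "\<dots> \<le> (\<Sum>j=1..n-1. \<omega> * integral\<^sup>L M (\<lambda>s. idle_time \<tau> x (\<lambda>k. Bs k s) (Suc j))
                      + (1 - \<omega>) * integral\<^sup>L M (\<lambda>s. wait_time \<tau> x (\<lambda>k. Bs k s) (Suc j)))"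
    unfolding sum_distrib_left K_def using assms(2,3) q_bounds
    by (intro sum_mono) (auto simp: mult.commute intro!: expected_slot_cost_ge[OF assms(10,4,5,6,11,12,13,15)])
  also have "\<dots> = appt_cost M Bs n \<tau> x \<omega>"
    using assms(1) by (simp add: appt_cost_eq_sum_slots)
  finally show ?thesis
    using assms(6) by (simp add: K_def q_def check_loss_def mult.commute)
qed

end
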